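(* Let $m,n,k$ be positive integers with $(m,k-1)=1$ and $n=\mathrm{ind}_m(k)$, let $G=G(m,n,k)=\langle a,b;\ a^m=1,\ b^n=1,\ b^{-1}ab=a^k\rangle$, and let $S\subseteq\mathbb{Z}_m$ be a base. Then \[ \Sigma_G(S)=\dot{\bigcup_{x\in S^*}}\Big(\bigcup_{y\in Y(x)} C(x,y)\Big), \] and the union over $x\in S^*$ is disjoint.
   Context: $\mathrm{ind}_m(k)$ is the least positive integer $d$ with $k^d\equiv 1\pmod m$. Every element of $G$ is written uniquely as $a^ib^j$ with $i\in\mathbb{Z}_m$, $j\in\mathbb{Z}_n$. For $t\ge 0$ let $k_t=k^t-1 \pmod m$. Maps are written on the right of their arguments, and the composition $\mu\circ\nu$ means "first $\mu$, then $\nu$". For $x,y\in\mathbb{Z}_m$ the mu-map $\mu(x,y):G\to G$ is defined by $(a^ib^j)\mu(x,y)=a^{N}$ with $N=xik^j-yk_j \pmod m$. The container is $C(x,y)=\{\mu(x,yz): z\in\mathbb{Z}_m\}$. For $S\subseteq\mathbb{Z}_m$, $I(S)$ denotes the elements of $S$ invertible in $\mathbb{Z}_m$, and $S^*$ is the multiplicative subsemigroup of $\mathbb{Z}_m$ generated by $S$. A base is a subset $S\subseteq\mathbb{Z}_m$ with $0\in S$ and $I(S)\neq\varnothing$. For a base $S$, $\Sigma_G(S)$ is the semigroup (under composition) of maps $G\to G$ generated by $\{\mu(s,z): s\in S,\ z\in\mathbb{Z}_m\}$. For $x\in S^*$, $Y(x)=\{s^*z:\ s^*\in S^*,\ z\in\mathbb{Z}_m,\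 \text{and there exists } s\in S \text{ with } x\equiv ss^*\pmod m\}$. *)

theory Defs
  imports "HOL-Number_Theory.Number_Theory" "HOL-Library.FuncSet" "HOL-Library.Disjoint_Sets"
begin

text \<open>Z_m is represented by the integers {0..<m}; the element a^i b^j of
  G(m,n,k) is represented by the pair (i,j) with i < m, j < n.\<close>

definition Zm :: "nat \<Rightarrow> int set" where
  "Zm m = {0..<int m}"

definition Gcar :: "nat \<Rightarrow> nat \<Rightarrow> (nat \<times> nat) set" where
  "Gcar m n = {0..<m} \<times> {0..<n}"

definition mu :: "nat \<Rightarrow> nat \<Rightarrow> nat \<Rightarrow> int \<Rightarrow> int \<Rightarrow> (nat \<times> nat \<Rightarrow> nat \<times> nat)" where
  "mu m n k x y = (\<lambda>(i,j) \<in> Gcar m n.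
      (nat ((x * int i * int k ^ j - y * (int k ^ j - 1)) mod int m), 0))"

definition then_map :: "nat \<Rightarrow> nat \<Rightarrow> (nat \<times> nat \<Rightarrow> nat \<times> nat) \<Rightarrow> (nat \<times> nat \<Rightarrow> nat \<times> nat)
    \<Rightarrow> (nat \<times> nat \<Rightarrow> nat \<times> nat)" where
  "then_map m n f g = compose (Gcar m n) g f"

definition container :: "nat \<Rightarrow> nat \<Rightarrow> nat \<Rightarrow> int \<Rightarrow> int \<Rightarrow> (nat \<times> nat \<Rightarrow> nat \<times> nat) set" where
  "container m n k x y = {mu m n k x ((y * z) mod int m) | z. z \<in> Zm m}"

definition invertibles :: "nat \<Rightarrow> int set \<Rightarrow> int set" where
  "invertibles m S = {s \<in> S. coprime s (int m)}"

definition is_base :: "nat \<Rightarrow> int set \<Rightarrow> bool" where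
  "is_base m S \<longleftrightarrow> S \<subseteq> Zm m \<and> 0 \<in> S \<and> invertibles m S \<noteq> {}"

inductive_set semigen :: "nat \<Rightarrow> int set \<Rightarrow> int set" for m S where
  base: "s \<in> S \<Longrightarrow> s \<in> semigen m S"
| mult: "a \<in> semigen m S \<Longrightarrow> b \<in> semigen m S \<Longrightarrow> (a * b) mod int m \<in> semigen m S"

inductive_set SigmaG :: "nat \<Rightarrow> nat \<Rightarrow> nat \<Rightarrow> int set \<Rightarrow> (nat \<times> nat \<Rightarrow> nat \<times> nat) set"
  for m n k S where
  gen: "s \<in> S \<Longrightarrow> z \<in> Zm m \<Longrightarrow> mu m n k s z \<in> SigmaG m n k S"
| comp: "f \<in> SigmaG m n k S \<Longrightarrow> g \<in> SigmaG m n k S \<Longrightarrow> then_map m n f g \<in> SigmaG m n k S"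

definition Yset :: "nat \<Rightarrow> int set \<Rightarrow> int \<Rightarrow> int set" where
  "Yset m S x = {(s' * z) mod int m | s' z. s' \<in> semigen m S \<and> z \<in> Zm m \<and>
      (\<exists>s \<in> S. [x = s * s'] (mod int m))}"

end

theory Submission
  imports Defs
begin

text \<open>Composing mu-maps multiplies their first parameters:
  mu(x1,y1) followed by mu(x2,y2) is mu(x1 x2, x2 y1). Hence every element of Sigma_G(S)
  is some mu(x,y) with x in S^*, and following the second parameter through the generation
  shows that y ranges exactly over Y(x). Since Y(x) is closed under multiplication by Z_m,
  the containers C(x,y) with y in Y(x) merely regroup these maps. Finally mu(x,y) sends a
  to a^x, so the map determines x, which gives disjointness.\<close>

lemma mu_cong:
  assumes "[x = x'] (mod int m)" "[y = y'] (mod int m)"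
  shows "mu m n k x y = mu m n k x' y'"
proof -
  have "[x * int i * int k ^ j - y * (int k ^ j - 1)
      = x' * int i * int k ^ j - y' * (int k ^ j - 1)] (mod int m)" for i j
    using assms by (intro cong_diff cong_mult cong_refl)
  then show ?thesis
    unfolding mu_def cong_def by simp
qed

lemma mu_apply:
  "(i, j) \<in> Gcar m n \<Longrightarrow>
    mu m n k x y (i, j) = (nat ((x * int i * int k ^ j - y * (int k ^ j - 1)) mod int m), 0)"
  by (simp add: mu_def)

lemma mu_in_Gcar:
  assumes "m > 0" "n > 0" "p \<in> Gcar m n"
  shows "mu m n k x y p \<in> Gcar m n"
  using assms by (cases p) (auto simp: mu_apply Gcar_def nat_less_iff)

lemma then_map_mu:
  assumes "m > 0" "n > 0"
  shows "then_map m n (mu m n k x1 y1) (mu m n k x2 y2) = mu m n k (x1 * x2) (x2 * y1)"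
proof (rule ext)
  fix p
  show "then_map m n (mu m n k x1 y1) (mu m n k x2 y2) p = mu m n k (x1 * x2) (x2 * y1) p"
  proof (cases "p \<in> Gcar m n")
    case True
    then obtain i j where p: "p = (i, j)" "(i, j) \<in> Gcar m n" by (cases p) auto
    define N where "N = (x1 * int i * int k ^ j - y1 * (int k ^ j - 1)) mod int m"
    have "(nat N, 0) \<in> Gcar m n"
      using mu_in_Gcar[OF assms p(2)] p(2) by (simp add: mu_apply N_def)
    moreover have "N \<ge> 0" using assms by (simp add: N_def)
    moreover have "(x2 * N) mod int m
        = (x1 * x2 * int i * int k ^ j - x2 * y1 * (int k ^ j - 1)) mod int m"
      unfolding N_def by (simp add: mod_mult_right_eq algebra_simps)
    ultimately show ?thesis
      using p by (simp add: then_map_def compose_def mu_apply N_def)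
  next
    case False
    then show ?thesis by (simp add: then_map_def compose_def mu_def)
  qed
qed

lemma mu_eq_imp_cong:
  assumes "1 < m" "0 < n" "mu m n k x y = mu m n k x' y'"
  shows "[x = x'] (mod int m)"
proof -
  have "(1, 0) \<in> Gcar m n" using assms(1,2) by (simp add: Gcar_def)
  then have "nat (x mod int m) = nat (x' mod int m)"
    using fun_cong[OF assms(3), of "(1, 0)"] by (simp add: mu_apply)
  then show ?thesis
    using assms(1) by (simp add: cong_def eq_nat_nat_iff)
qed

lemma semigen_subset_Zm:
  assumes "m > 0" "S \<subseteq> Zm m"
  shows "semigen m S \<subseteq> Zm m"
proof
  fix a assume "a \<in> semigen m S"
  then show "a \<in> Zm m"
    by induction (use assms in \<open>auto simp: Zm_def\<close>)
qed

lemma power_mod_in_semigen: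
  assumes "u \<in> semigen m S" "u mod int m = u"
  shows "u ^ Suc r mod int m \<in> semigen m S"
proof (induction r)
  case 0
  then show ?case using assms by simp
next
  case (Suc r)
  have "(u ^ Suc r mod int m * u) mod int m \<in> semigen m S"
    using Suc assms(1) by (rule semigen.mult)
  then show ?case
    by (metis mod_mult_left_eq mult.commute power_Suc)
qed

lemma one_mod_in_semigen:
  assumes "u \<in> semigen m S" "u \<in> Zm m" "coprime u (int m)"
  shows "1 mod int m \<in> semigen m S"
proof -
  have u: "0 \<le> u" "u < int m" using assms(2) by (auto simp: Zm_def)
  then have "coprime (nat u) m" using assms(3)
    by (metis coprime_int_iff int_nat_eq)
  then have "[nat u ^ totient m = 1] (mod m)" by (rule euler_theorem)
  then have "[u ^ totient m = 1] (mod int m)" using u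
    by (metis cong_int_iff int_nat_eq of_nat_1 of_nat_power)
  moreover have "totient m > 0" using u by simp
  ultimately show ?thesis
    using power_mod_in_semigen[OF assms(1), of "totient m - 1"] u by (simp add: cong_def)
qed

lemma is_base_one_mod_in_semigen:
  assumes "is_base m S"
  shows "1 mod int m \<in> semigen m S"
proof -
  obtain u where "u \<in> S" "coprime u (int m)"
    using assms by (auto simp: is_base_def invertibles_def)
  moreover have "u \<in> Zm m" using assms \<open>u \<in> S\<close> by (auto simp: is_base_def)
  ultimately show ?thesis
    by (intro one_mod_in_semigen[of u]) (auto intro: semigen.base)
qed

lemma mu_zero_in_SigmaG:
  assumes "m > 0" "n > 0" "a \<in> semigen m S"
  shows "mu m n k a 0 \<in> SigmaG m n k S"
  using assms(3)
proof induction
  case (base s)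
  then show ?case using assms(1) by (intro SigmaG.gen) (auto simp: Zm_def)
next
  case (mult a b)
  have "then_map m n (mu m n k a 0) (mu m n k b 0) \<in> SigmaG m n k S"
    using mult.IH by (rule SigmaG.comp)
  moreover have "mu m n k ((a * b) mod int m) 0 = mu m n k (a * b) 0"
    by (rule mu_cong) (simp_all add: cong_def)
  ultimately show ?case
    using assms(1,2) by (simp add: then_map_mu)
qed

lemma Yset_mult_closed:
  assumes "y \<in> Yset m S x" "z \<in> Zm m"
  shows "(y * z) mod int m \<in> Yset m S x"
proof -
  obtain s' z0 s where y: "y = (s' * z0) mod int m" "s' \<in> semigen m S" "z0 \<in> Zm m"
    "s \<in> S" "[x = s * s'] (mod int m)"
    using assms(1) unfolding Yset_def by blast
  have "(y * z) mod int m = (s' * ((z0 * z) mod int m)) mod int m"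
    unfolding y(1) by (simp add: mod_mult_left_eq mod_mult_right_eq mult.assoc)
  moreover have "(z0 * z) mod int m \<in> Zm m" using assms(2) by (auto simp: Zm_def)
  ultimately show ?thesis
    unfolding Yset_def using y(2-5) by blast
qed

text \<open>For y = s' z0 with x = s s', the map mu(x,y) is mu(s,z0) followed by mu(s',0).\<close>

lemma mu_Yset_in_SigmaG:
  assumes "m > 0" "n > 0" "y \<in> Yset m S x"
  shows "mu m n k x y \<in> SigmaG m n k S"
proof -
  obtain s' z0 s where y: "y = (s' * z0) mod int m" "s' \<in> semigen m S" "z0 \<in> Zm m"
    "s \<in> S" "[x = s * s'] (mod int m)"
    using assms(3) unfolding Yset_def by blast
  have "then_map m n (mu m n k s z0) (mu m n k s' 0) \<in> SigmaG m n k S"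
    using y(2-4) assms(1,2) by (intro SigmaG.comp SigmaG.gen mu_zero_in_SigmaG)
  moreover have "mu m n k (s * s') (s' * z0) = mu m n k x y"
    using y(1,5) by (intro mu_cong) (simp_all add: cong_def)
  ultimately show ?thesis
    using assms(1,2) by (simp add: then_map_mu mult.commute)
qed

lemma SigmaG_imp_mu_Yset:
  assumes "m > 0" "n > 0" "is_base m S" "f \<in> SigmaG m n k S"
  shows "\<exists>x \<in> semigen m S. \<exists>y \<in> Yset m S x. f = mu m n k x y"
  using assms(4)
proof induction
  case (gen s z)
  have "[s = s * (1 mod int m)] (mod int m)"
    by (simp add: cong_def mod_mult_right_eq)
  moreover have "z = (1 mod int m * z) mod int m"
    using gen.hyps(2) by (simp add: mod_mult_left_eq Zm_def)
  ultimately have "z \<in> Yset m S s"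
    unfolding Yset_def using gen is_base_one_mod_in_semigen[OF assms(3)] by blast
  then show ?case using gen.hyps(1) by (blast intro: semigen.base)
next
  case (comp f g)
  obtain x1 y1 where f: "f = mu m n k x1 y1" "x1 \<in> semigen m S" "y1 \<in> Yset m S x1"
    using comp.IH(1) by blast
  obtain s1' t1 s1 where y1: "y1 = (s1' * t1) mod int m" "s1' \<in> semigen m S" "t1 \<in> Zm m"
    "s1 \<in> S" "[x1 = s1 * s1'] (mod int m)"
    using f(3) unfolding Yset_def by blast
  obtain x2 y2 where g: "g = mu m n k x2 y2" "x2 \<in> semigen m S"
    using comp.IH(2) by blast
  define x where "x = (x1 * x2) mod int m"
  define s' where "s' = (s1' * x2) mod int m"
  have "[x = s1 * s'] (mod int m)"
  proof -
    have "[x1 * x2 = s1 * s1' * x2] (mod int m)" using y1(5) by (intro cong_mult cong_refl)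
    then show ?thesis
      unfolding x_def s'_def cong_def by (simp add: mod_mult_right_eq mult.assoc)
  qed
  then have "(s' * t1) mod int m \<in> Yset m S x"
    unfolding Yset_def using y1(2-4) g(2) s'_def by (blast intro: semigen.mult)
  moreover have "x \<in> semigen m S"
    unfolding x_def using f(2) g(2) by (rule semigen.mult)
  moreover have "then_map m n f g = mu m n k (x1 * x2) (x2 * y1)"
    unfolding f(1) g(1) using assms(1,2) by (rule then_map_mu)
  moreover have "mu m n k (x1 * x2) (x2 * y1) = mu m n k x ((s' * t1) mod int m)"
    unfolding x_def s'_def y1(1)
    by (rule mu_cong) (simp_all add: cong_def mod_mult_right_eq mod_mult_left_eq algebra_simps)
  ultimately show ?case by auto
qed

lemma SigmaG_eq_UN_mu_Yset:
  assumes "m > 0" "n > 0" "is_base m S"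
  shows "SigmaG m n k S = (\<Union>x \<in> semigen m S. mu m n k x ` Yset m S x)"
  using SigmaG_imp_mu_Yset[OF assms] mu_Yset_in_SigmaG[OF assms(1,2)] by blast

lemma mu_in_container:
  assumes "m > 0"
  shows "mu m n k x y \<in> container m n k x y"
proof -
  have "mu m n k x y = mu m n k x ((y * (1 mod int m)) mod int m)"
    by (rule mu_cong) (simp_all add: cong_def mod_mult_right_eq)
  moreover have "1 mod int m \<in> Zm m" using assms by (simp add: Zm_def)
  ultimately show ?thesis
    unfolding container_def by blast
qed

lemma UN_container_eq_mu_Yset:
  assumes "m > 0"
  shows "(\<Union>y \<in> Yset m S x. container m n k x y) = mu m n k x ` Yset m S x"
proof
  show "(\<Union>y \<in> Yset m S x. container m n k x y) \<subseteq> mu m n k x ` Yset m S x"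
    unfolding container_def by (auto intro: Yset_mult_closed)
  show "mu m n k x ` Yset m S x \<subseteq> (\<Union>y \<in> Yset m S x. container m n k x y)"
    using mu_in_container[OF assms] by blast
qed

lemma disjoint_family_on_mu_Yset:
  assumes "m > 0" "n > 0" "S \<subseteq> Zm m"
  shows "disjoint_family_on (\<lambda>x. mu m n k x ` Yset m S x) (semigen m S)"
  unfolding disjoint_family_on_def
proof (intro ballI impI)
  fix a b assume ab: "a \<in> semigen m S" "b \<in> semigen m S" "a \<noteq> b"
  then have "a \<in> Zm m" "b \<in> Zm m"
    using semigen_subset_Zm[OF assms(1,3)] by auto
  with ab(3) have "1 < m" "\<not> [a = b] (mod int m)"
    by (auto simp: Zm_def cong_def)
  then show "mu m n k a ` Yset m S a \<inter> mu m n k b ` Yset m S b = {}"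
    using mu_eq_imp_cong[OF _ assms(2)] by blast
qed

theorem theorem4p6:
  fixes m n k :: nat and S :: "int set"
  assumes "m > 0" and "n > 0" and "k > 0"
    and "coprime m (k - 1)"
    and "n = ord m k"
    and "is_base m S"
  shows "SigmaG m n k S = (\<Union>x \<in> semigen m S. \<Union>y \<in> Yset m S x. container m n k x y)
    \<and> disjoint_family_on (\<lambda>x. \<Union>y \<in> Yset m S x. container m n k x y) (semigen m S)"
proof -
  have S: "S \<subseteq> Zm m" using assms(6) by (simp add: is_base_def)
  show ?thesis
    unfolding UN_container_eq_mu_Yset[OF assms(1)]
    using SigmaG_eq_UN_mu_Yset[OF assms(1,2,6)] disjoint_family_on_mu_Yset[OF assms(1,2) S]
    by blast
qed

end
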